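(* For every $b\in[0,1]$ define functions $G^n_b\colon[0,1]^n\to[0,1]$ inductively by $G^1_b(x_0)=\mathsf{Med}_b(\chi_0(x_0),\chi_1(x_0))$, $G^2_b(x_0,x_1)=\mathsf{Med}_b(\chi_0(x_0\vee x_1),\chi_1(x_0\wedge x_1))$, and $G^{n+1}_b(x_0,\dots,x_n)=G^2_b(G^n_b(x_0,\dots,x_{n-1}),x_n)$ for $n\ge2$. Then for every $n\in\mathbb{N}$ and $b\in[0,1]$, $G^n_b$ is an aggregation function and for $\mathbf{x}\in[0,1]^n$: $G^n_b(\mathbf{x})=0$ if $\mathbf{x}=(0,\dots,0)$, $G^n_b(\mathbf{x})=1$ if $\mathbf{x}=(1,\dots,1)$, and $G^n_b(\mathbf{x})=b$ otherwise.
   Context: An $n$-ary aggregation function on $[0,1]$ is a function $f\colon[0,1]^n\to[0,1]$ nondecreasing in each coordinate with $f(0,\dots,0)=0$ and $f(1,\dots,1)=1$. For $a\in[0,1]$, $\chi_a\colon[0,1]\to[0,1]$ is given by $\chi_a(x)=1$ if $x\ge a$ and $x\neq0$, and $\chi_a(x)=0$ otherwise. $\mathsf{Med}_b(x,y)$ is the median of $x,y,b$. $\vee,\wedge$ denote max and min. *)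

theory Defs
  imports Complex_Main
begin

text \<open>Points of [0,1]^n are represented as functions nat => real; only the
  coordinates 0..n-1 are relevant.\<close>

definition unit_cube :: "nat \<Rightarrow> (nat \<Rightarrow> real) set" where
  "unit_cube n = {x. \<forall>i<n. 0 \<le> x i \<and> x i \<le> 1}"

definition aggregation_function :: "nat \<Rightarrow> ((nat \<Rightarrow> real) \<Rightarrow> real) \<Rightarrow> bool" where
  "aggregation_function n f \<longleftrightarrow>
     (\<forall>x\<in>unit_cube n. 0 \<le> f x \<and> f x \<le> 1) \<and>
     (\<forall>x\<in>unit_cube n. \<forall>y\<in>unit_cube n. (\<forall>i<n. x i \<le> y i) \<longrightarrow> f x \<le> f y) \<and>
     f (\<lambda>_. 0) = 0 \<and> f (\<lambda>_. 1) = 1"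

definition chi :: "real \<Rightarrow> real \<Rightarrow> real" where
  "chi a x = (if x \<ge> a \<and> x \<noteq> 0 then 1 else 0)"

definition Med :: "real \<Rightarrow> real \<Rightarrow> real \<Rightarrow> real" where
  "Med b x y = max (min x y) (min (max x y) b)"

definition G2 :: "real \<Rightarrow> real \<Rightarrow> real \<Rightarrow> real" where
  "G2 b x0 x1 = Med b (chi 0 (max x0 x1)) (chi 1 (min x0 x1))"

fun G :: "real \<Rightarrow> nat \<Rightarrow> (nat \<Rightarrow> real) \<Rightarrow> real" where
  "G b 0 x = 0"   \<comment> \<open>junk value; G^0 is not considered\<close>
| "G b (Suc 0) x = Med b (chi 0 (x 0)) (chi 1 (x 0))"
| "G b (Suc (Suc 0)) x = G2 b (x 0) (x 1)"
| "G b (Suc (Suc (Suc n))) x = G2 b (G b (Suc (Suc n)) x) (x (Suc (Suc n)))"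

end

theory Submission
  imports Defs
begin

text \<open>On [0,1], \<open>chi 0 (max x y)\<close> detects whether some argument is nonzero and
  \<open>chi 1 (min x y)\<close> whether both are 1, so \<open>G2 b\<close> takes only the values 0, 1 and b.
  Inductively, \<open>G b n\<close> is 0 on the zero vector, 1 on the all-ones vector and b
  elsewhere; such a three-valued function is monotone, hence an aggregation function.\<close>

lemma chi_0_eq: "0 \<le> x \<Longrightarrow> chi 0 x = (if x = 0 then 0 else 1)"
  by (simp add: chi_def)

lemma chi_1_eq: "x \<le> 1 \<Longrightarrow> chi 1 x = (if x = 1 then 1 else 0)"
  by (simp add: chi_def)

lemma Med_same [simp]: "Med b x x = x"
  by (simp add: Med_def)

lemma Med_1_0: "0 \<le> b \<Longrightarrow> b \<le> 1 \<Longrightarrow> Med b 1 0 = b"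
  by (simp add: Med_def)

lemma G2_eq:
  assumes "0 \<le> u" "u \<le> 1" "0 \<le> v" "v \<le> 1" "0 \<le> b" "b \<le> 1"
  shows "G2 b u v = (if u = 0 \<and> v = 0 then 0 else if u = 1 \<and> v = 1 then 1 else b)"
proof -
  have "chi 0 (max u v) = (if u = 0 \<and> v = 0 then 0 else 1)"
    using assms by (auto simp: chi_0_eq max_def)
  moreover have "chi 1 (min u v) = (if u = 1 \<and> v = 1 then 1 else 0)"
    using assms by (auto simp: chi_1_eq min_def)
  ultimately show ?thesis
    using assms by (auto simp: G2_def Med_1_0)
qed

lemma unit_cube_Suc: "x \<in> unit_cube (Suc n) \<longleftrightarrow> x \<in> unit_cube n \<and> 0 \<le> x n \<and> x n \<le> 1"
  by (auto simp: unit_cube_def All_less_Suc)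

lemma G_eq:
  assumes "1 \<le> n" "0 \<le> b" "b \<le> 1" "x \<in> unit_cube n"
  shows "G b n x = (if \<forall>i<n. x i = 0 then 0 else if \<forall>i<n. x i = 1 then 1 else b)"
  using assms
proof (induction b n x rule: G.induct)
  case (1 b x)
  then show ?case by simp
next
  case (2 b x)
  then show ?case
    by (simp add: unit_cube_def chi_0_eq chi_1_eq Med_1_0)
next
  case (3 b x)
  then show ?case
    by (simp add: unit_cube_Suc numeral_2_eq_2 G2_eq All_less_Suc)
next
  case (4 b n x)
  let ?m = "Suc (Suc n)"
  have x: "x \<in> unit_cube ?m" "0 \<le> x ?m" "x ?m \<le> 1"
    using "4.prems" by (simp_all only: unit_cube_Suc)
  have IH: "G b ?m x = (if \<forall>i<?m. x i = 0 then 0 else if \<forall>i<?m. x i = 1 then 1 else b)"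
    using "4.IH" "4.prems" x by simp
  then have "0 \<le> G b ?m x" "G b ?m x \<le> 1"
    using "4.prems" by auto
  then have "G b (Suc ?m) x =
      (if G b ?m x = 0 \<and> x ?m = 0 then 0 else if G b ?m x = 1 \<and> x ?m = 1 then 1 else b)"
    using G2_eq x "4.prems" by simp
  \<comment> \<open>for b = 0 or b = 1 the prefix value b coincides with a corner value, hence the split\<close>
  then show ?case
    using IH by (cases "b = 0"; cases "b = 1"; auto simp: All_less_Suc)
qed

lemma aggregation_function_three_valued:
  assumes "1 \<le> n" "0 \<le> b" "b \<le> 1"
    and f: "\<And>x. x \<in> unit_cube n \<Longrightarrow>
      f x = (if \<forall>i<n. x i = 0 then 0 else if \<forall>i<n. x i = 1 then 1 else b)"
  shows "aggregation_function n f"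
proof -
  have cube_0: "(\<lambda>_. 0) \<in> unit_cube n" and cube_1: "(\<lambda>_. 1) \<in> unit_cube n"
    by (simp_all add: unit_cube_def)
  have mono: "f x \<le> f y"
    if x: "x \<in> unit_cube n" and y: "y \<in> unit_cube n" and le: "\<forall>i<n. x i \<le> y i" for x y
  proof -
    have "(\<forall>i<n. y i = 0) \<Longrightarrow> (\<forall>i<n. x i = 0)" and "(\<forall>i<n. x i = 1) \<Longrightarrow> (\<forall>i<n. y i = 1)"
      using x y le by (force simp: unit_cube_def)+
    then show ?thesis
      using f[OF x] f[OF y] assms(2,3) by auto
  qed
  have "\<not> (\<forall>i<n. (0::real) = 1)"
    using \<open>1 \<le> n\<close> by (auto intro: exI[of _ 0])
  then show ?thesis
    unfolding aggregation_function_def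
    using f assms(2,3) mono by (auto simp: f[OF cube_0] f[OF cube_1])
qed

theorem lemma1:
  fixes n :: nat and b :: real
  assumes "1 \<le> n" and "0 \<le> b" and "b \<le> 1"
  shows "aggregation_function n (G b n) \<and>
         (\<forall>x\<in>unit_cube n.
            G b n x = (if (\<forall>i<n. x i = 0) then 0
                       else if (\<forall>i<n. x i = 1) then 1 else b))"
  using G_eq[OF assms] aggregation_function_three_valued[OF assms] by blast

end
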